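(* Let $d\ge 1$ and $1\le p<q<\infty$. Then the discrete Morrey space $\ell^p_q(\mathbb{Z}^d)$ satisfies $$C_{\rm NJ}(\ell^p_q)=C_{\rm J}(\ell^p_q)=2\quad\text{and}\quad C_{\rm DW}(\ell^p_q)=4.$$
   Context: Let $\omega:=\mathbb{N}\cup\{0\}$. For $m\in\mathbb{Z}^d$ and $N\in\omega$ let $S_{m,N}:=\{k\in\mathbb{Z}^d:\|k-m\|_\infty\le N\}$, where $\|(k_1,\dots,k_d)\|_\infty=\max_i|k_i|$; its cardinality is $|S_{m,N}|=(2N+1)^d$. For $1\le p\le q<\infty$, the discrete Morrey space $\ell^p_q=\ell^p_q(\mathbb{Z}^d)$ is the Banach space of all functions $x:\mathbb{Z}^d\to\mathbb{R}$ with $$\|x\|_{\ell^p_q}:=\sup_{m\in\mathbb{Z}^d,\,N\in\omega}|S_{m,N}|^{\frac1q-\frac1p}\Big(\sum_{k\in S_{m,N}}|x(k)|^p\Big)^{1/p}<\infty.$$ For a Banach space $X$: the von Neumann–Jordan constant is $C_{\rm NJ}(X):=\sup\Big\{\frac{\|x+y\|_X^2+\|x-y\|_X^2}{2(\|x\|_X^2+\|y\|_X^2)}: x,y\in X\setminus\{0\}\Big\}$; the James constant is $C_{\rm J}(X):=\sup\{\min\{\|x+y\|_X,\|x-y\|_X\}: x,y\in X,\ \|x\|_X=\|y\|_X=1\}$; the Dunkl–Williams constant is $C_{\rm DW}(X):=\sup\Big\{\frac{\|x\|_X+\|y\|_X}{\|x-y\|_X}\Big\|\frac{x}{\|x\|_X}-\frac{y}{\|y\|_X}\Big\|_X: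 x,y\in X,\ x\neq0,\ y\neq0,\ x\neq y\Big\}$. *)

theory Defs
  imports "HOL-Analysis.Analysis"
begin

text \<open>Points of Z^d are int vectors indexed by a finite type 'd (d = CARD('d) \<ge> 1).\<close>

definition cube :: "int ^ 'd \<Rightarrow> nat \<Rightarrow> (int ^ 'd) set" where
  "cube m N = {k. (\<forall>i. \<bar>k $ i - m $ i\<bar> \<le> int N)}"

definition morrey_norm :: "real \<Rightarrow> real \<Rightarrow> (int ^ ('d::finite) \<Rightarrow> real) \<Rightarrow> real" where
  "morrey_norm p q x =
     (SUP mN \<in> (UNIV :: ((int ^ 'd) \<times> nat) set).
        real (card (cube (fst mN) (snd mN))) powr (1/q - 1/p) *
        (\<Sum>k\<in>cube (fst mN) (snd mN). \<bar>x k\<bar> powr p) powr (1/p))"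

definition morrey_space :: "real \<Rightarrow> real \<Rightarrow> (int ^ ('d::finite) \<Rightarrow> real) set" where
  "morrey_space p q = {x. bdd_above ((\<lambda>mN. 
        real (card (cube (fst mN) (snd mN))) powr (1/q - 1/p) *
        (\<Sum>k\<in>cube (fst mN) (snd mN). \<bar>x k\<bar> powr p) powr (1/p)) ` UNIV)}"

definition C_NJ :: "('b \<Rightarrow> real) set \<Rightarrow> (('b \<Rightarrow> real) \<Rightarrow> real) \<Rightarrow> ereal" where
  "C_NJ X nrm = Sup {ereal (((nrm (\<lambda>k. x k + y k))\<^sup>2 + (nrm (\<lambda>k. x k - y k))\<^sup>2) / (2 * ((nrm x)\<^sup>2 + (nrm y)\<^sup>2))) |
      x y. x \<in> X \<and> y \<in> X \<and> x \<noteq> (\<lambda>_. 0) \<and> y \<noteq> (\<lambda>_. 0)}"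

definition C_J :: "('b \<Rightarrow> real) set \<Rightarrow> (('b \<Rightarrow> real) \<Rightarrow> real) \<Rightarrow> ereal" where
  "C_J X nrm = Sup {ereal (min (nrm (\<lambda>k. x k + y k)) (nrm (\<lambda>k. x k - y k))) |
      x y. x \<in> X \<and> y \<in> X \<and> nrm x = 1 \<and> nrm y = 1}"

definition C_DW :: "('b \<Rightarrow> real) set \<Rightarrow> (('b \<Rightarrow> real) \<Rightarrow> real) \<Rightarrow> ereal" where
  "C_DW X nrm = Sup {ereal ((nrm x + nrm y) / nrm (\<lambda>k. x k - y k) * nrm (\<lambda>k. x k / nrm x - y k / nrm y)) |
      x y. x \<in> X \<and> y \<in> X \<and> x \<noteq> (\<lambda>_. 0) \<and> y \<noteq> (\<lambda>_. 0) \<and> x \<noteq> y}"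

end

theory Submission
  imports Defs
begin

text \<open>The triangle inequality alone gives \<open>C_NJ \<le> 2\<close>, \<open>C_J \<le> 2\<close> and \<open>C_DW \<le> 4\<close>
  in every normed space, the last via
  \<open>norm (x / norm x - y / norm y) * max (norm x) (norm y) \<le> 2 * norm (x - y)\<close>.
  All three bounds are attained as soon as the space contains an isometric copy of the plane
  with the max-norm. In the Morrey space with \<open>p < q\<close> the unit masses at \<open>0\<close> and at a
  far point \<open>a\<close> span such a copy: every cube containing both points is large, so its factor
  \<open>|S| powr (1/q - 1/p)\<close> absorbs the factor \<open>2 powr (1/p)\<close> of the two-point \<open>p\<close>-sum,
  whence \<open>norm (\<alpha> \<delta>\<^sub>0 + \<beta> \<delta>\<^sub>a) = max |\<alpha>| |\<beta>|\<close>.\<close>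

definition normed_function_space :: "('b \<Rightarrow> real) set \<Rightarrow> (('b \<Rightarrow> real) \<Rightarrow> real) \<Rightarrow> bool" where
  "normed_function_space X nrm \<longleftrightarrow>
     (\<forall>x\<in>X. 0 \<le> nrm x \<and> (nrm x = 0 \<longrightarrow> x = (\<lambda>_. 0))) \<and>
     (\<forall>x\<in>X. \<forall>y\<in>X. \<forall>a b. (\<lambda>k. a * x k + b * y k) \<in> X \<and>
        nrm (\<lambda>k. a * x k + b * y k) \<le> \<bar>a\<bar> * nrm x + \<bar>b\<bar> * nrm y)"

lemma normed_function_space_nonneg:
  "normed_function_space X nrm \<Longrightarrow> x \<in> X \<Longrightarrow> 0 \<le> nrm x"
  by (simp add: normed_function_space_def)

lemma normed_function_space_pos:
  "normed_function_space X nrm \<Longrightarrow> x \<in> X \<Longrightarrow> x \<noteq> (\<lambda>_. 0) \<Longrightarrow> 0 < nrm x"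
  unfolding normed_function_space_def by (metis order_le_less)

lemma normed_function_space_combination:
  assumes "normed_function_space X nrm" "x \<in> X" "y \<in> X" "\<And>k. z k = a * x k + b * y k"
  shows "z \<in> X" "nrm z \<le> \<bar>a\<bar> * nrm x + \<bar>b\<bar> * nrm y"
proof -
  have "z = (\<lambda>k. a * x k + b * y k)" using assms(4) by blast
  then show "z \<in> X" "nrm z \<le> \<bar>a\<bar> * nrm x + \<bar>b\<bar> * nrm y"
    using assms(1-3) unfolding normed_function_space_def by auto
qed

lemma C_NJ_le_ereal:
  assumes "\<And>x y. x \<in> X \<Longrightarrow> y \<in> X \<Longrightarrow> x \<noteq> (\<lambda>_. 0) \<Longrightarrow> y \<noteq> (\<lambda>_. 0) \<Longrightarrow>
    ((nrm (\<lambda>k. x k + y k))\<^sup>2 + (nrm (\<lambda>k. x k - y k))\<^sup>2) / (2 * ((nrm x)\<^sup>2 + (nrm y)\<^sup>2)) \<le> c"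
  shows "C_NJ X nrm \<le> ereal c"
  unfolding C_NJ_def using assms by (auto intro!: Sup_least)

lemma ereal_le_C_NJ:
  assumes "x \<in> X" "y \<in> X" "x \<noteq> (\<lambda>_. 0)" "y \<noteq> (\<lambda>_. 0)"
  shows "ereal (((nrm (\<lambda>k. x k + y k))\<^sup>2 + (nrm (\<lambda>k. x k - y k))\<^sup>2) / (2 * ((nrm x)\<^sup>2 + (nrm y)\<^sup>2)))
           \<le> C_NJ X nrm"
  unfolding C_NJ_def using assms by (auto intro!: Sup_upper)

lemma C_J_le_ereal:
  assumes "\<And>x y. x \<in> X \<Longrightarrow> y \<in> X \<Longrightarrow> nrm x = 1 \<Longrightarrow> nrm y = 1 \<Longrightarrow>
    min (nrm (\<lambda>k. x k + y k)) (nrm (\<lambda>k. x k - y k)) \<le> c"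
  shows "C_J X nrm \<le> ereal c"
  unfolding C_J_def
proof (rule Sup_least, clarify)
  fix x y assume "x \<in> X" "y \<in> X" "nrm x = 1" "nrm y = 1"
  then show "ereal (min (nrm (\<lambda>k. x k + y k)) (nrm (\<lambda>k. x k - y k))) \<le> ereal c"
    by (simp only: ereal_less_eq(3)) (rule assms)
qed

lemma ereal_le_C_J:
  assumes "x \<in> X" "y \<in> X" "nrm x = 1" "nrm y = 1"
  shows "ereal (min (nrm (\<lambda>k. x k + y k)) (nrm (\<lambda>k. x k - y k))) \<le> C_J X nrm"
  unfolding C_J_def using assms by (auto intro!: Sup_upper)

lemma C_DW_le_ereal:
  assumes "\<And>x y. x \<in> X \<Longrightarrow> y \<in> X \<Longrightarrow> x \<noteq> (\<lambda>_. 0) \<Longrightarrow> y \<noteq> (\<lambda>_. 0) \<Longrightarrow> x \<noteq> y \<Longrightarrow>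
    (nrm x + nrm y) / nrm (\<lambda>k. x k - y k) * nrm (\<lambda>k. x k / nrm x - y k / nrm y) \<le> c"
  shows "C_DW X nrm \<le> ereal c"
  unfolding C_DW_def using assms by (auto intro!: Sup_least)

lemma ereal_le_C_DW:
  assumes "x \<in> X" "y \<in> X" "x \<noteq> (\<lambda>_. 0)" "y \<noteq> (\<lambda>_. 0)" "x \<noteq> y"
  shows "ereal ((nrm x + nrm y) / nrm (\<lambda>k. x k - y k) * nrm (\<lambda>k. x k / nrm x - y k / nrm y))
           \<le> C_DW X nrm"
  unfolding C_DW_def using assms by (auto intro!: Sup_upper)

lemma C_NJ_le_2:
  assumes X: "normed_function_space X nrm"
  shows "C_NJ X nrm \<le> 2"
proof -
  have "((nrm (\<lambda>k. x k + y k))\<^sup>2 + (nrm (\<lambda>k. x k - y k))\<^sup>2) / (2 * ((nrm x)\<^sup>2 + (nrm y)\<^sup>2)) \<le> 2"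
    if xy: "x \<in> X" "y \<in> X" "x \<noteq> (\<lambda>_. 0)" for x y
  proof -
    let ?s = "nrm (\<lambda>k. x k + y k)" and ?d = "nrm (\<lambda>k. x k - y k)"
    have s: "0 \<le> ?s" "?s \<le> nrm x + nrm y"
      using normed_function_space_combination[OF X xy(1,2), of "\<lambda>k. x k + y k" 1 1]
        normed_function_space_nonneg[OF X] by auto
    have d: "0 \<le> ?d" "?d \<le> nrm x + nrm y"
      using normed_function_space_combination[OF X xy(1,2), of "\<lambda>k. x k - y k" 1 "-1"]
        normed_function_space_nonneg[OF X] by auto
    have "?s\<^sup>2 \<le> (nrm x + nrm y)\<^sup>2" "?d\<^sup>2 \<le> (nrm x + nrm y)\<^sup>2"
      using s d by (auto intro: power_mono)
    moreover have "(nrm x + nrm y)\<^sup>2 \<le> 2 * ((nrm x)\<^sup>2 + (nrm y)\<^sup>2)"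
      using sum_power2_ge_zero[of "nrm x - nrm y" 0] by (simp add: power2_eq_square algebra_simps)
    moreover have "0 < (nrm x)\<^sup>2 + (nrm y)\<^sup>2"
      using normed_function_space_pos[OF X xy(1,3)] by (simp add: add_pos_nonneg)
    ultimately show ?thesis by (simp add: divide_le_eq)
  qed
  then show ?thesis
    unfolding numeral_eq_ereal by (intro C_NJ_le_ereal) auto
qed

lemma C_J_le_2:
  assumes X: "normed_function_space X nrm"
  shows "C_J X nrm \<le> 2"
proof -
  have "nrm (\<lambda>k. x k + y k) \<le> 2" if "x \<in> X" "y \<in> X" "nrm x = 1" "nrm y = 1" for x y
    using normed_function_space_combination(2)[OF X that(1,2), of "\<lambda>k. x k + y k" 1 1] that(3,4)
    by simp
  then show ?thesis
    unfolding numeral_eq_ereal by (intro C_J_le_ereal) (auto simp: min_le_iff_disj)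
qed

lemma normalized_diff_le:
  assumes X: "normed_function_space X nrm" and xy: "x \<in> X" "y \<in> X" "x \<noteq> (\<lambda>_. 0)" "y \<noteq> (\<lambda>_. 0)"
  shows "nrm (\<lambda>k. x k / nrm x - y k / nrm y) * max (nrm x) (nrm y) \<le> 2 * nrm (\<lambda>k. x k - y k)"
proof -
  define A B D W where "A = nrm x" and "B = nrm y" and "D = nrm (\<lambda>k. x k - y k)"
    and "W = nrm (\<lambda>k. x k / A - y k / B)"
  have A: "0 < A" and B: "0 < B"
    unfolding A_def B_def using normed_function_space_pos[OF X] xy by auto
  have diff: "(\<lambda>k. x k - y k) \<in> X"
    using normed_function_space_combination(1)[OF X xy(1,2), of _ 1 "-1"] by simp
  have "B \<le> A + D" "A \<le> B + D"
    using normed_function_space_combination(2)[OF X xy(1) diff, of y 1 "-1"]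
      normed_function_space_combination(2)[OF X xy(2) diff, of x 1 1]
    unfolding A_def B_def D_def by auto
  then have "\<bar>B - A\<bar> \<le> D" by linarith
  moreover have "\<bar>1/A - 1/B\<bar> = \<bar>B - A\<bar> / (A * B)"
    using A B by (simp add: field_simps abs_divide)
  ultimately have AB: "\<bar>1/A - 1/B\<bar> * A \<le> D / B" "\<bar>1/A - 1/B\<bar> * B \<le> D / A"
    using A B by (simp_all add: divide_right_mono)
  have "x k / A - y k / B = 1/A * (x k - y k) + (1/A - 1/B) * y k" for k
    using A by (simp add: field_simps)
  from normed_function_space_combination(2)[OF X diff xy(2) this]
  have WA: "W * A \<le> 2 * D"
    using A AB(2) unfolding W_def B_def D_def by (simp add: field_simps)
  have "x k / A - y k / B = 1/B * (x k - y k) + (1/A - 1/B) * x k" for k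
    using B by (simp add: field_simps)
  from normed_function_space_combination(2)[OF X diff xy(1) this]
  have WB: "W * B \<le> 2 * D"
    using B AB(1) unfolding W_def A_def D_def by (simp add: field_simps)
  show ?thesis
    using WA WB unfolding A_def B_def D_def W_def by (simp add: max_def)
qed

lemma C_DW_le_4:
  assumes X: "normed_function_space X nrm"
  shows "C_DW X nrm \<le> 4"
proof -
  have "(nrm x + nrm y) / nrm (\<lambda>k. x k - y k) * nrm (\<lambda>k. x k / nrm x - y k / nrm y) \<le> 4"
    if xy: "x \<in> X" "y \<in> X" "x \<noteq> (\<lambda>_. 0)" "y \<noteq> (\<lambda>_. 0)" for x y
  proof -
    have "(\<lambda>k. x k / nrm x - y k / nrm y) \<in> X"
      using normed_function_space_combination(1)[OF X xy(1,2), of _ "1 / nrm x" "- 1 / nrm y"]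
      by simp
    then have "(nrm x + nrm y) * nrm (\<lambda>k. x k / nrm x - y k / nrm y)
        \<le> 2 * max (nrm x) (nrm y) * nrm (\<lambda>k. x k / nrm x - y k / nrm y)"
      by (intro mult_right_mono normed_function_space_nonneg[OF X]) auto
    also have "\<dots> \<le> 4 * nrm (\<lambda>k. x k - y k)"
      using normalized_diff_le[OF X xy] by (simp add: mult.commute)
    finally have "(nrm x + nrm y) * nrm (\<lambda>k. x k / nrm x - y k / nrm y) \<le> 4 * nrm (\<lambda>k. x k - y k)" .
    moreover have "0 \<le> nrm (\<lambda>k. x k - y k)"
      using normed_function_space_combination[OF X xy(1,2), of "\<lambda>k. x k - y k" 1 "-1"]
        normed_function_space_nonneg[OF X] by simp
    ultimately show ?thesis
      by (cases "nrm (\<lambda>k. x k - y k) = 0") (simp_all add: divide_le_eq mult.commute)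
  qed
  then show ?thesis
    unfolding numeral_eq_ereal by (intro C_DW_le_ereal) auto
qed

section \<open>Spaces containing the max-norm plane\<close>

definition linf2_pair :: "('b \<Rightarrow> real) set \<Rightarrow> (('b \<Rightarrow> real) \<Rightarrow> real) \<Rightarrow> ('b \<Rightarrow> real) \<Rightarrow> ('b \<Rightarrow> real) \<Rightarrow> bool" where
  "linf2_pair X nrm u v \<longleftrightarrow>
     (\<forall>\<alpha> \<beta>. (\<lambda>k. \<alpha> * u k + \<beta> * v k) \<in> X \<and> nrm (\<lambda>k. \<alpha> * u k + \<beta> * v k) = max \<bar>\<alpha>\<bar> \<bar>\<beta>\<bar>)"

lemma linf2_pairD:
  assumes "linf2_pair X nrm u v" "\<And>k. z k = \<alpha> * u k + \<beta> * v k"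
  shows "z \<in> X" "nrm z = max \<bar>\<alpha>\<bar> \<bar>\<beta>\<bar>"
proof -
  have "z = (\<lambda>k. \<alpha> * u k + \<beta> * v k)" using assms(2) by blast
  then show "z \<in> X" "nrm z = max \<bar>\<alpha>\<bar> \<bar>\<beta>\<bar>"
    using assms(1) unfolding linf2_pair_def by auto
qed

lemma linf2_pair_nonzero:
  assumes "linf2_pair X nrm u v" "z \<in> X" "nrm z \<noteq> 0"
  shows "z \<noteq> (\<lambda>_. 0)"
  using linf2_pairD(2)[OF assms(1), of "\<lambda>_. 0" 0 0] assms(3) by auto

lemma linf2_pair_diagonals:
  assumes uv: "linf2_pair X nrm u v"
  shows "(\<lambda>k. u k + v k) \<in> X" "(\<lambda>k. u k - v k) \<in> X"
    and "nrm (\<lambda>k. u k + v k) = 1" "nrm (\<lambda>k. u k - v k) = 1"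
    and "nrm (\<lambda>k. (u k + v k) + (u k - v k)) = 2" "nrm (\<lambda>k. (u k + v k) - (u k - v k)) = 2"
  using linf2_pairD[OF uv, of "\<lambda>k. u k + v k" 1 1] linf2_pairD[OF uv, of "\<lambda>k. u k - v k" 1 "-1"]
    linf2_pairD(2)[OF uv, of "\<lambda>k. (u k + v k) + (u k - v k)" 2 0]
    linf2_pairD(2)[OF uv, of "\<lambda>k. (u k + v k) - (u k - v k)" 0 2]
  by simp_all

lemma C_NJ_ge_2:
  assumes uv: "linf2_pair X nrm u v"
  shows "2 \<le> C_NJ X nrm"
proof -
  note diag = linf2_pair_diagonals[OF uv]
  have "ereal 2 \<le> C_NJ X nrm"
    using ereal_le_C_NJ[where nrm = nrm, OF diag(1,2)
        linf2_pair_nonzero[OF uv diag(1)] linf2_pair_nonzero[OF uv diag(2)]]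
    unfolding diag(3-6) by simp
  then show ?thesis by (simp add: numeral_eq_ereal)
qed

lemma C_J_ge_2:
  assumes uv: "linf2_pair X nrm u v"
  shows "2 \<le> C_J X nrm"
proof -
  note diag = linf2_pair_diagonals[OF uv]
  have "ereal 2 \<le> C_J X nrm"
    using ereal_le_C_J[where nrm = nrm, OF diag(1-4)] unfolding diag(5,6) by simp
  then show ?thesis by (simp add: numeral_eq_ereal)
qed

lemma C_DW_ge_4:
  assumes uv: "linf2_pair X nrm u v"
  shows "4 \<le> C_DW X nrm"
proof (rule ereal_le_epsilon2)
  fix \<delta> :: real assume "0 < \<delta>"
  define \<epsilon> where "\<epsilon> = min (1/4) (\<delta>/2)"
  have \<epsilon>: "0 < \<epsilon>" "\<epsilon> \<le> 1/4" "4 - \<delta> \<le> 4 - 2 * \<epsilon>"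
    using \<open>0 < \<delta>\<close> by (auto simp: \<epsilon>_def)
  let ?x = "\<lambda>k. u k + (1 - 2 * \<epsilon>) * v k" and ?y = "\<lambda>k. (1 - \<epsilon>) * u k + (1 - \<epsilon>) * v k"
  have x: "?x \<in> X" "nrm ?x = 1"
    using linf2_pairD[OF uv, of ?x 1 "1 - 2 * \<epsilon>"] \<epsilon> by simp_all
  have y: "?y \<in> X" "nrm ?y = 1 - \<epsilon>"
    using linf2_pairD[OF uv, of ?y "1 - \<epsilon>" "1 - \<epsilon>"] \<epsilon> by simp_all
  have "?x k - ?y k = \<epsilon> * u k + (- \<epsilon>) * v k" for k
    by (simp add: algebra_simps)
  from linf2_pairD(2)[OF uv this]
  have d: "nrm (\<lambda>k. ?x k - ?y k) = \<epsilon>"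
    using \<epsilon> by simp
  have "?x k / 1 - ?y k / (1 - \<epsilon>) = 0 * u k + (- 2 * \<epsilon>) * v k" for k
    using \<epsilon> by (simp add: field_simps)
  from linf2_pairD(2)[OF uv this]
  have w: "nrm (\<lambda>k. ?x k / 1 - ?y k / (1 - \<epsilon>)) = 2 * \<epsilon>"
    using \<epsilon> by simp
  have "?x \<noteq> ?y"
  proof
    assume "?x = ?y"
    then have "(\<lambda>k. ?x k - ?y k) = (\<lambda>_. 0)" by (simp add: fun_eq_iff)
    then show False
      using linf2_pairD(2)[OF uv, of "\<lambda>_. 0" 0 0] d \<epsilon> by simp
  qed
  from ereal_le_C_DW[where nrm = nrm, OF x(1) y(1)
      linf2_pair_nonzero[OF uv x(1)] linf2_pair_nonzero[OF uv y(1)] this]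
  moreover have "(1 + (1 - \<epsilon>)) / \<epsilon> * (2 * \<epsilon>) = 4 - 2 * \<epsilon>"
    using \<epsilon> by (simp add: field_simps)
  ultimately have "ereal (4 - 2 * \<epsilon>) \<le> C_DW X nrm"
    unfolding x(2) y(2) d w using \<epsilon> by (simp add: mult.commute)
  then show "4 \<le> C_DW X nrm + ereal \<delta>"
    using \<epsilon>(3) by (cases "C_DW X nrm") (auto simp: numeral_eq_ereal)
qed

section \<open>Minkowski's inequality for finite sums\<close>

lemma convex_on_powr_nonneg:
  fixes p :: real
  assumes "1 \<le> p"
  shows "convex_on {0..} (\<lambda>x. x powr p)"
proof (rule convex_on_linorderI)
  fix t x y :: real
  assume t: "0 < t" "t < 1" and xy: "x \<in> {0..}" "y \<in> {0..}" "x < y"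
  show "((1 - t) *\<^sub>R x + t *\<^sub>R y) powr p \<le> (1 - t) * x powr p + t * y powr p"
  proof (cases "x = 0")
    case True
    have "t powr p * y powr p \<le> t * y powr p"
      using t assms by (intro mult_right_mono powr_le_one_le) auto
    then show ?thesis
      using True assms by (simp add: powr_mult)
  next
    case False
    then show ?thesis
      using convex_onD[OF powr_convex[OF assms], of t x y] t xy by auto
  qed
qed simp

lemma sum_powr_scale:
  fixes a :: "'a \<Rightarrow> real"
  assumes "0 \<le> c" "0 < p" "\<And>k. 0 \<le> a k"
  shows "(\<Sum>k\<in>S. (c * a k) powr p) powr (1/p) = c * (\<Sum>k\<in>S. a k powr p) powr (1/p)"
proof -
  have "(\<Sum>k\<in>S. (c * a k) powr p) = c powr p * (\<Sum>k\<in>S. a k powr p)"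
    by (simp add: powr_mult sum_distrib_left)
  then show ?thesis
    using assms by (simp add: powr_mult powr_powr)
qed

lemma minkowski_sum_powr:
  fixes a b :: "'a \<Rightarrow> real"
  assumes "finite S" "1 \<le> p" and a: "\<And>k. 0 \<le> a k" and b: "\<And>k. 0 \<le> b k"
  shows "(\<Sum>k\<in>S. (a k + b k) powr p) powr (1/p)
           \<le> (\<Sum>k\<in>S. a k powr p) powr (1/p) + (\<Sum>k\<in>S. b k powr p) powr (1/p)"
proof -
  define A where "A = (\<Sum>k\<in>S. a k powr p) powr (1/p)"
  define B where "B = (\<Sum>k\<in>S. b k powr p) powr (1/p)"
  have p: "0 < p" using assms by simp
  have Ap: "A powr p = (\<Sum>k\<in>S. a k powr p)" and Bp: "B powr p = (\<Sum>k\<in>S. b k powr p)"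
    unfolding A_def B_def using p by (simp_all add: powr_powr sum_nonneg)
  show ?thesis
  proof (cases "A = 0 \<or> B = 0")
    case True
    then have "(\<forall>k\<in>S. a k = 0) \<or> (\<forall>k\<in>S. b k = 0)"
      using Ap Bp a b assms(1) by (auto simp: sum_nonneg_eq_0_iff)
    then show ?thesis
      unfolding A_def B_def by auto
  next
    case False
    then have A: "0 < A" and B: "0 < B" unfolding A_def B_def by auto
    define t where "t = B / (A + B)"
    have t: "0 \<le> t" "t \<le> 1" "1 - t = A / (A + B)"
      using A B by (auto simp: t_def field_simps)
    have "((a k + b k) / (A + B)) powr p \<le> (1 - t) * (a k powr p / A powr p) + t * (b k powr p / B powr p)"
      for k
    proof -
      have "(a k + b k) / (A + B) = (1 - t) *\<^sub>R (a k / A) + t *\<^sub>R (b k / B)"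
        unfolding t(3) using A B by (simp add: t_def add_divide_distrib)
      then show ?thesis
        using convex_onD[OF convex_on_powr_nonneg[OF assms(2)] t(1,2), of "a k / A" "b k / B"] A B a b
        by (simp add: powr_divide)
    qed
    then have "(\<Sum>k\<in>S. ((a k + b k) / (A + B)) powr p)
        \<le> (\<Sum>k\<in>S. (1 - t) * (a k powr p / A powr p) + t * (b k powr p / B powr p))"
      by (rule sum_mono)
    also have "\<dots> = 1"
      using A B by (simp add: sum.distrib flip: sum_distrib_left sum_divide_distrib Ap Bp)
    finally have "(\<Sum>k\<in>S. (a k + b k) powr p) \<le> (A + B) powr p"
      using A B by (simp add: powr_divide flip: sum_divide_distrib)
    then have "(\<Sum>k\<in>S. (a k + b k) powr p) powr (1/p) \<le> ((A + B) powr p) powr (1/p)"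
      using p by (intro powr_mono2) (auto intro: sum_nonneg)
    then show ?thesis
      using A B p by (simp add: powr_powr A_def B_def)
  qed
qed

section \<open>Discrete Morrey spaces\<close>

definition morrey_term :: "real \<Rightarrow> real \<Rightarrow> (int ^ ('d::finite) \<Rightarrow> real) \<Rightarrow> (int ^ 'd) \<times> nat \<Rightarrow> real" where
  "morrey_term p q x mN = real (card (cube (fst mN) (snd mN))) powr (1/q - 1/p) *
     (\<Sum>k\<in>cube (fst mN) (snd mN). \<bar>x k\<bar> powr p) powr (1/p)"

lemma morrey_norm_eq_SUP: "morrey_norm p q x = (SUP mN. morrey_term p q x mN)"
  unfolding morrey_norm_def morrey_term_def ..

lemma morrey_space_eq: "morrey_space p q = {x. bdd_above (range (morrey_term p q x))}"
  unfolding morrey_space_def morrey_term_def ..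

lemma morrey_term_nonneg: "0 \<le> morrey_term p q x mN"
  unfolding morrey_term_def by simp

lemma morrey_term_le_norm: "x \<in> morrey_space p q \<Longrightarrow> morrey_term p q x mN \<le> morrey_norm p q x"
  unfolding morrey_space_eq morrey_norm_eq_SUP by (auto intro: cSUP_upper)

lemma morrey_norm_nonneg: "x \<in> morrey_space p q \<Longrightarrow> 0 \<le> morrey_norm p q x"
  using morrey_term_nonneg morrey_term_le_norm order_trans by blast

lemma morrey_norm_le:
  assumes "\<And>mN. morrey_term p q x mN \<le> c"
  shows "x \<in> morrey_space p q \<and> morrey_norm p q x \<le> c"
proof
  show "x \<in> morrey_space p q"
    unfolding morrey_space_eq by (auto intro: bdd_aboveI2 assms)
  show "morrey_norm p q x \<le> c"
    unfolding morrey_norm_eq_SUP by (simp add: cSUP_least assms)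
qed

lemma cube_0: "cube m 0 = {m}"
  unfolding cube_def by (auto simp: vec_eq_iff)

lemma morrey_term_singleton: "0 < p \<Longrightarrow> morrey_term p q x (m, 0) = \<bar>x m\<bar>"
  unfolding morrey_term_def by (simp add: cube_0 powr_powr)

lemma abs_le_morrey_norm: "0 < p \<Longrightarrow> x \<in> morrey_space p q \<Longrightarrow> \<bar>x k\<bar> \<le> morrey_norm p q x"
  using morrey_term_le_norm[of x p q "(k, 0)"] by (simp add: morrey_term_singleton)

lemma morrey_term_dominated:
  assumes p: "1 \<le> p" and c: "0 \<le> c1" "0 \<le> c2"
    and dom: "\<And>k. \<bar>z k\<bar> \<le> c1 * \<bar>x k\<bar> + c2 * \<bar>y k\<bar>"
  shows "morrey_term p q z mN \<le> c1 * morrey_term p q x mN + c2 * morrey_term p q y mN"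
proof (cases "finite (cube (fst mN) (snd mN))")
  case False
  then show ?thesis by (simp add: morrey_term_def)
next
  case True
  define C where "C = cube (fst mN) (snd mN)"
  have "(\<Sum>k\<in>C. \<bar>z k\<bar> powr p) powr (1/p) \<le> (\<Sum>k\<in>C. (c1 * \<bar>x k\<bar> + c2 * \<bar>y k\<bar>) powr p) powr (1/p)"
    using p dom by (intro powr_mono2 sum_mono sum_nonneg) auto
  also have "\<dots> \<le> (\<Sum>k\<in>C. (c1 * \<bar>x k\<bar>) powr p) powr (1/p) + (\<Sum>k\<in>C. (c2 * \<bar>y k\<bar>) powr p) powr (1/p)"
    using True c p unfolding C_def by (intro minkowski_sum_powr) auto
  also have "\<dots> = c1 * (\<Sum>k\<in>C. \<bar>x k\<bar> powr p) powr (1/p) + c2 * (\<Sum>k\<in>C. \<bar>y k\<bar> powr p) powr (1/p)"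
    using c p by (simp add: sum_powr_scale)
  finally have "real (card C) powr (1/q - 1/p) * (\<Sum>k\<in>C. \<bar>z k\<bar> powr p) powr (1/p)
      \<le> real (card C) powr (1/q - 1/p) * (c1 * (\<Sum>k\<in>C. \<bar>x k\<bar> powr p) powr (1/p)
           + c2 * (\<Sum>k\<in>C. \<bar>y k\<bar> powr p) powr (1/p))"
    by (rule mult_left_mono) simp
  then show ?thesis
    unfolding morrey_term_def C_def[symmetric] by (simp add: algebra_simps)
qed

lemma morrey_norm_dominated:
  assumes p: "1 \<le> p" and c: "0 \<le> c1" "0 \<le> c2" and xy: "x \<in> morrey_space p q" "y \<in> morrey_space p q"
    and dom: "\<And>k. \<bar>z k\<bar> \<le> c1 * \<bar>x k\<bar> + c2 * \<bar>y k\<bar>"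
  shows "z \<in> morrey_space p q \<and> morrey_norm p q z \<le> c1 * morrey_norm p q x + c2 * morrey_norm p q y"
proof (rule morrey_norm_le)
  fix mN
  have "morrey_term p q z mN \<le> c1 * morrey_term p q x mN + c2 * morrey_term p q y mN"
    by (rule morrey_term_dominated[OF p c dom])
  also have "\<dots> \<le> c1 * morrey_norm p q x + c2 * morrey_norm p q y"
    using c xy by (intro add_mono mult_left_mono morrey_term_le_norm)
  finally show "morrey_term p q z mN \<le> c1 * morrey_norm p q x + c2 * morrey_norm p q y" .
qed

lemma normed_function_space_morrey:
  assumes "1 \<le> p"
  shows "normed_function_space (morrey_space p q :: (int ^ 'd::finite \<Rightarrow> real) set) (morrey_norm p q)"
  unfolding normed_function_space_def
proof (intro conjI ballI allI impI)
  fix x :: "int ^ 'd \<Rightarrow> real" assume x: "x \<in> morrey_space p q"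
  show "0 \<le> morrey_norm p q x" by (rule morrey_norm_nonneg[OF x])
  assume "morrey_norm p q x = 0"
  then show "x = (\<lambda>_. 0)"
    using abs_le_morrey_norm[OF _ x] assms by (force simp: fun_eq_iff)
next
  fix x y :: "int ^ 'd \<Rightarrow> real" and a b :: real
  assume xy: "x \<in> morrey_space p q" "y \<in> morrey_space p q"
  have "\<bar>a * x k + b * y k\<bar> \<le> \<bar>a\<bar> * \<bar>x k\<bar> + \<bar>b\<bar> * \<bar>y k\<bar>" for k
    by (metis abs_mult abs_triangle_ineq)
  from morrey_norm_dominated[OF assms abs_ge_zero abs_ge_zero xy this]
  show "(\<lambda>k. a * x k + b * y k) \<in> morrey_space p q"
    "morrey_norm p q (\<lambda>k. a * x k + b * y k) \<le> \<bar>a\<bar> * morrey_norm p q x + \<bar>b\<bar> * morrey_norm p q y"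
    by auto
qed

lemma card_cube_powr_le_1:
  assumes "0 < p" "p \<le> q"
  shows "real (card (cube m N)) powr (1/q - 1/p) \<le> 1"
proof (cases "card (cube m N) = 0")
  case False
  then have "real (card (cube m N)) powr (1/q - 1/p) \<le> real (card (cube m N)) powr 0"
    using assms by (intro powr_mono) (auto simp: frac_le)
  then show ?thesis using False by simp
qed simp

lemma card_cube_ge:
  fixes m :: "int ^ 'd::finite"
  assumes "0 \<in> cube m N" "(\<chi> i. int M) \<in> cube m N" "finite (cube m N)"
  shows "M + 1 \<le> card (cube m N)"
proof -
  obtain i :: 'd where True by blast
  from assms(1,2) have "\<bar>m $ i\<bar> \<le> int N" "\<bar>int M - m $ i\<bar> \<le> int N"
    unfolding cube_def by auto
  then have M: "int M \<le> 2 * int N" by linarith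
  define g where "g t = (\<chi> i. m $ i + t)" for t :: int
  have "inj_on g {- int N .. int N}"
    by (auto simp: inj_on_def g_def vec_eq_iff)
  moreover have "g ` {- int N .. int N} \<subseteq> cube m N"
    by (auto simp: g_def cube_def)
  ultimately have "card {- int N .. int N} \<le> card (cube m N)"
    using card_inj_on_le assms(3) by blast
  then show ?thesis using M by simp
qed

lemma sum_powr_two_points:
  fixes \<alpha> \<beta> p :: real
  assumes "c \<noteq> a" "finite C"
  shows "(\<Sum>k\<in>C. \<bar>\<alpha> * indicator {c} k + \<beta> * indicator {a} k\<bar> powr p)
           = (if c \<in> C then \<bar>\<alpha>\<bar> powr p else 0) + (if a \<in> C then \<bar>\<beta>\<bar> powr p else 0)"
proof -
  have "\<bar>\<alpha> * indicator {c} k + \<beta> * indicator {a} k\<bar> powr p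
          = (if k = c then \<bar>\<alpha>\<bar> powr p else 0) + (if k = a then \<bar>\<beta>\<bar> powr p else 0)" for k
    using assms(1) by (auto simp: indicator_def)
  then show ?thesis
    using assms(2) by (simp add: sum.distrib)
qed

lemma powr_sum_two_le_max:
  fixes \<alpha> \<beta> p :: real
  assumes "0 < p"
  shows "(\<bar>\<alpha>\<bar> powr p + \<bar>\<beta>\<bar> powr p) powr (1/p) \<le> 2 powr (1/p) * max \<bar>\<alpha>\<bar> \<bar>\<beta>\<bar>"
proof -
  have "\<bar>\<alpha>\<bar> powr p \<le> max \<bar>\<alpha>\<bar> \<bar>\<beta>\<bar> powr p" "\<bar>\<beta>\<bar> powr p \<le> max \<bar>\<alpha>\<bar> \<bar>\<beta>\<bar> powr p"
    using assms by (simp_all add: powr_mono2)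
  then have "\<bar>\<alpha>\<bar> powr p + \<bar>\<beta>\<bar> powr p \<le> 2 * max \<bar>\<alpha>\<bar> \<bar>\<beta>\<bar> powr p"
    by linarith
  then have "(\<bar>\<alpha>\<bar> powr p + \<bar>\<beta>\<bar> powr p) powr (1/p) \<le> (2 * max \<bar>\<alpha>\<bar> \<bar>\<beta>\<bar> powr p) powr (1/p)"
    using assms by (intro powr_mono2) auto
  then show ?thesis
    using assms by (simp add: powr_mult powr_powr)
qed


text \<open>The bound on \<open>M\<close> is what makes \<open>M powr (1/q - 1/p) * 2 powr (1/p) \<le> 1\<close>.\<close>
lemma morrey_term_two_points_le:
  fixes \<alpha> \<beta> :: real
  assumes p: "0 < p" "p < q" and M: "2 powr (1 / (p * (1/p - 1/q))) \<le> real M"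
  defines "a \<equiv> (\<chi> i. int M) :: int ^ 'd::finite"
  shows "morrey_term p q (\<lambda>k. \<alpha> * indicator {0} k + \<beta> * indicator {a} k) mN \<le> max \<bar>\<alpha>\<bar> \<bar>\<beta>\<bar>"
proof (cases "finite (cube (fst mN) (snd mN))")
  case False
  then show ?thesis by (simp add: morrey_term_def)
next
  case True
  define C where "C = cube (fst mN) (snd mN)"
  define w where "w = real (card C) powr (1/q - 1/p)"
  define r where "r = 1/p - 1/q"
  have r: "0 < r" "1/q - 1/p = - r" using p by (simp_all add: r_def frac_less2)
  have "0 < real M" using M powr_gt_zero[of 2 "1 / (p * r)"] unfolding r_def by linarith
  then have "a \<noteq> 0" by (auto simp: a_def vec_eq_iff)
  have w: "0 \<le> w" "w \<le> 1"
    using card_cube_powr_le_1[OF p(1) less_imp_le[OF p(2)]] unfolding w_def C_def by auto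
  have mt: "morrey_term p q (\<lambda>k. \<alpha> * indicator {0} k + \<beta> * indicator {a} k) mN
      = w * ((if 0 \<in> C then \<bar>\<alpha>\<bar> powr p else 0) + (if a \<in> C then \<bar>\<beta>\<bar> powr p else 0)) powr (1/p)"
    unfolding morrey_term_def w_def C_def using sum_powr_two_points[OF \<open>a \<noteq> 0\<close>[symmetric] True] by simp
  show ?thesis
  proof (cases "0 \<in> C \<and> a \<in> C")
    case both: True
    have "real M \<le> real (card C)"
      using card_cube_ge[of "fst mN" "snd mN" M] both True unfolding C_def a_def by simp
    then have "w \<le> real M powr (- r)"
      unfolding w_def r(2) using \<open>0 < real M\<close> r(1) by (intro powr_mono2') auto
    moreover have "(2 powr (1 / (p * r))) powr r \<le> real M powr r"
      using M r(1) unfolding r_def by (intro powr_mono2) auto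
    then have "2 powr (1/p) \<le> real M powr r"
      using r(1) p(1) by (simp add: powr_powr)
    ultimately have "w * 2 powr (1/p) \<le> real M powr (- r) * real M powr r"
      using w(1) by (intro mult_mono) auto
    then have "w * 2 powr (1/p) \<le> 1"
      using \<open>0 < real M\<close> by (simp add: powr_minus)
    have "w * ((\<bar>\<alpha>\<bar> powr p + \<bar>\<beta>\<bar> powr p) powr (1/p)) \<le> w * (2 powr (1/p) * max \<bar>\<alpha>\<bar> \<bar>\<beta>\<bar>)"
      using powr_sum_two_le_max[OF p(1)] w(1) by (rule mult_left_mono)
    also have "\<dots> = (w * 2 powr (1/p)) * max \<bar>\<alpha>\<bar> \<bar>\<beta>\<bar>"
      by simp
    also have "\<dots> \<le> max \<bar>\<alpha>\<bar> \<bar>\<beta>\<bar>"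
      using \<open>w * 2 powr (1/p) \<le> 1\<close> w(1) by (intro mult_left_le_one_le) auto
    finally show ?thesis
      unfolding mt using both by simp
  next
    case False
    then have "((if 0 \<in> C then \<bar>\<alpha>\<bar> powr p else 0) + (if a \<in> C then \<bar>\<beta>\<bar> powr p else 0)) powr (1/p)
        \<le> max \<bar>\<alpha>\<bar> \<bar>\<beta>\<bar>"
      using p by (auto simp: powr_powr)
    then show ?thesis
      unfolding mt using mult_left_le_one_le[OF powr_ge_zero w] by (rule order_trans[rotated])
  qed
qed

lemma linf2_pair_morrey:
  assumes p: "0 < p" "p < q"
  shows "\<exists>u v. linf2_pair (morrey_space p q :: (int ^ 'd::finite \<Rightarrow> real) set) (morrey_norm p q) u v"
proof -
  obtain M :: nat where M: "2 powr (1 / (p * (1/p - 1/q))) \<le> real M"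
    using reals_Archimedean2 less_imp_le by blast
  define a :: "int ^ 'd" where "a = (\<chi> i. int M)"
  have "0 < real M" using M powr_gt_zero[of 2 "1 / (p * (1/p - 1/q))"] by linarith
  then have "a \<noteq> 0" by (auto simp: a_def vec_eq_iff)
  have "linf2_pair (morrey_space p q) (morrey_norm p q) (indicator {0}) (indicator {a})"
    unfolding linf2_pair_def
  proof (intro allI conjI)
    fix \<alpha> \<beta> :: real
    let ?z = "\<lambda>k. \<alpha> * indicator {0} k + \<beta> * indicator {a} k"
    have z: "?z \<in> morrey_space p q" "morrey_norm p q ?z \<le> max \<bar>\<alpha>\<bar> \<bar>\<beta>\<bar>"
      using morrey_norm_le[OF morrey_term_two_points_le[OF p M]] unfolding a_def by blast+
    then show "?z \<in> morrey_space p q" by blast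
    have "\<bar>?z 0\<bar> \<le> morrey_norm p q ?z" "\<bar>?z a\<bar> \<le> morrey_norm p q ?z"
      using abs_le_morrey_norm[OF p(1) z(1)] by blast+
    then show "morrey_norm p q ?z = max \<bar>\<alpha>\<bar> \<bar>\<beta>\<bar>"
      using z(2) \<open>a \<noteq> 0\<close> by (simp add: indicator_def)
  qed
  then show ?thesis by blast
qed

theorem theorem2:
  fixes p q :: real
  assumes "1 \<le> p" and "p < q"
  shows "C_NJ (morrey_space p q :: (int ^ ('d::finite) \<Rightarrow> real) set) (morrey_norm p q) = 2
       \<and> C_J (morrey_space p q :: (int ^ ('d::finite) \<Rightarrow> real) set) (morrey_norm p q) = 2
       \<and> C_DW (morrey_space p q :: (int ^ ('d::finite) \<Rightarrow> real) set) (morrey_norm p q) = 4"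
proof -
  have X: "normed_function_space (morrey_space p q :: (int ^ 'd \<Rightarrow> real) set) (morrey_norm p q)"
    using normed_function_space_morrey[OF assms(1)] .
  have "0 < p" using assms(1) by simp
  then obtain u v where uv: "linf2_pair (morrey_space p q :: (int ^ 'd \<Rightarrow> real) set) (morrey_norm p q) u v"
    using linf2_pair_morrey[OF _ assms(2)] by blast
  show ?thesis
    using C_NJ_le_2[OF X] C_NJ_ge_2[OF uv] C_J_le_2[OF X] C_J_ge_2[OF uv]
      C_DW_le_4[OF X] C_DW_ge_4[OF uv]
    by (auto intro: antisym)
qed

end
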